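(* Let $G$ be an unweighted digraph without loops with directed deformed graph Laplacian $M(t)$. If $\lambda\notin\{1,-1\}$ is a finite eigenvalue of the directed deformed graph Laplacian $M_i(t)$ of exactly one strongly connected or single node component $G_i$ of $G$ (and of no other component's), then the geometric multiplicity of $\lambda$ as an eigenvalue of $M(t)$ equals its geometric multiplicity as an eigenvalue of $M_i(t)$.
   Context: A digraph $G=(V,E)$, no loops or multiple edges, adjacency matrix $A$; $S=A\circ A^T$, $D=\mathrm{diag}(\mathrm{diag}(A^2))$; $M(t)=I-At+(D-I)t^2+(A-S)t^3$, and similarly $M_i(t)$ for the component $G_i$. Components are the induced subgraphs on the classes of "$i=j$ or mutually reachable by directed walks". The geometric multiplicity of an eigenvalue $\lambda$ is $\dim\ker M(\lambda)$. *)

theory Defs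
  imports "Jordan_Normal_Form.Matrix_Kernel" "Jordan_Normal_Form.DL_Submatrix"
    "Jordan_Normal_Form.Determinant"
begin

text \<open>A digraph on the vertex set {0..<n} is given by its edge relation E
  (E \<subseteq> {0..<n} x {0..<n}, no loops; no multiple edges is automatic for a relation).\<close>

definition digraph_adj :: "nat \<Rightarrow> (nat \<times> nat) set \<Rightarrow> complex mat" where
  "digraph_adj n E = mat n n (\<lambda>(i,j). if (i,j) \<in> E then 1 else 0)"

definition sym_part :: "complex mat \<Rightarrow> complex mat" where
  "sym_part A = mat (dim_row A) (dim_col A) (\<lambda>(i,j). A $$ (i,j) * A $$ (j,i))"

definition deg2_diag :: "complex mat \<Rightarrow> complex mat" where
  "deg2_diag A = mat (dim_row A) (dim_col A) (\<lambda>(i,j). if i = j then (A * A) $$ (i,i) else 0)"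

definition deformed_laplacian :: "complex mat \<Rightarrow> complex \<Rightarrow> complex mat" where
  "deformed_laplacian A t =
     1\<^sub>m (dim_row A) - t \<cdot>\<^sub>m A + (t^2) \<cdot>\<^sub>m (deg2_diag A - 1\<^sub>m (dim_row A))
       + (t^3) \<cdot>\<^sub>m (A - sym_part A)"

definition comp_rel :: "nat \<Rightarrow> (nat \<times> nat) set \<Rightarrow> (nat \<times> nat) set" where
  "comp_rel n E = {(i,j). i < n \<and> j < n \<and> (i = j \<or> ((i,j) \<in> E\<^sup>+ \<and> (j,i) \<in> E\<^sup>+))}"

definition components :: "nat \<Rightarrow> (nat \<times> nat) set \<Rightarrow> nat set set" where
  "components n E = {0..<n} // comp_rel n E"

text \<open>Laplacian of the induced subgraph on the vertex class C (vertices renumbered in increasing order).\<close>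
definition component_laplacian :: "nat \<Rightarrow> (nat \<times> nat) set \<Rightarrow> nat set \<Rightarrow> complex \<Rightarrow> complex mat" where
  "component_laplacian n E C = deformed_laplacian (submatrix (digraph_adj n E) C C)"

definition finite_eigenvalue :: "(complex \<Rightarrow> complex mat) \<Rightarrow> complex \<Rightarrow> bool" where
  "finite_eigenvalue M l \<longleftrightarrow> det (M l) = 0"

definition geom_mult :: "(complex \<Rightarrow> complex mat) \<Rightarrow> complex \<Rightarrow> nat" where
  "geom_mult M l = kernel_dim (M l)"

end

theory Submission
  imports Defs
begin

text \<open>Off the diagonal, \<open>M(t)\<close> is supported on the edges of \<open>G\<close>, and an edge leaving a
  component never returns to it. Ordering the components by reachability, \<open>M(\<lambda>)\<close> is
  therefore block triangular with the \<open>M\<^sub>j(\<lambda>)\<close> as diagonal blocks. Peeling off sink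
  components one at a time shows that a kernel vector vanishes on every vertex that cannot
  reach \<open>G\<^sub>i\<close>, because all those blocks are nonsingular; on \<open>G\<^sub>i\<close> itself it is then a kernel
  vector of \<open>M\<^sub>i(\<lambda>)\<close>. Conversely every kernel vector of \<open>M\<^sub>i(\<lambda>)\<close> extends uniquely, since
  the rows outside \<open>G\<^sub>i\<close> together with the coordinates on \<open>G\<^sub>i\<close> form a nonsingular system.
  So restriction to \<open>G\<^sub>i\<close> is an isomorphism of the two kernels.\<close>

lemma kernel_dim_eq_if_linear_bij:
  fixes M N :: "'a::field mat"
  assumes M: "M \<in> carrier_mat n n" and N: "N \<in> carrier_mat k k"
    and add: "\<And>x y. x \<in> carrier_vec n \<Longrightarrow> y \<in> carrier_vec n \<Longrightarrow> r (x + y) = r x + r y"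
    and smult: "\<And>c x. x \<in> carrier_vec n \<Longrightarrow> r (c \<cdot>\<^sub>v x) = c \<cdot>\<^sub>v r x"
    and inj: "inj_on r (mat_kernel M)"
    and img: "r ` mat_kernel M = mat_kernel N"
  shows "kernel_dim M = kernel_dim N"
proof -
  interpret KM: kernel n n M by (unfold_locales, rule M)
  interpret KN: kernel k k N by (unfold_locales, rule N)
  have "linear_map class_ring KM.VK KN.VK r"
  proof (intro linear_map.intro)
    show "vectorspace class_ring KM.VK" by (rule KM.Ker.vectorspace_axioms)
    show "vectorspace class_ring KN.VK" by (rule KN.Ker.vectorspace_axioms)
    show "mod_hom class_ring KM.VK KN.VK r"
      apply (intro mod_hom.intro mod_hom_axioms.intro)
        apply (rule KM.Ker.module_axioms)
       apply (rule KN.Ker.module_axioms)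
      unfolding LinearCombinations.module_hom_def
      using img mat_kernel_carrier[OF M] mat_kernel_carrier[OF N]
      by (auto simp: module_vec_simps class_ring_simps intro!: add smult)
  qed
  then interpret L: linear_map class_ring KM.VK KN.VK r .
  obtain B where "finite B" "KM.basis B" using kernel_basis_exists[OF M] by auto
  then have "KM.Ker.fin_dim" unfolding KM.Ker.fin_dim_def KM.Ker.basis_def by auto
  then have "KM.dim = KN.dim"
    by (rule L.dim_eq) (use inj img in auto)
  then show ?thesis using M N unfolding kernel_dim_def by simp
qed

lemma exists_mult_mat_vec_eq_if_kernel_trivial:
  fixes N :: "'a::field mat"
  assumes N: "N \<in> carrier_mat n n"
    and trivial: "\<And>v. v \<in> carrier_vec n \<Longrightarrow> N *\<^sub>v v = 0\<^sub>v n \<Longrightarrow> v = 0\<^sub>v n"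
    and w: "w \<in> carrier_vec n"
  shows "\<exists>x\<in>carrier_vec n. N *\<^sub>v x = w"
proof -
  have "det N \<noteq> 0"
  proof
    assume "det N = 0"
    then obtain v where "v \<in> carrier_vec n" "v \<noteq> 0\<^sub>v n" "N *\<^sub>v v = 0\<^sub>v n"
      using det_0_iff_vec_prod_zero[OF N] by blast
    then show False using trivial by blast
  qed
  then obtain B where B: "B \<in> carrier_mat n n" and NB: "N * B = 1\<^sub>m n"
    using det_non_zero_imp_unit[OF N, unfolded Units_def, of "()"] by (auto simp: ring_mat_def)
  have "N *\<^sub>v (B *\<^sub>v w) = w" using assoc_mult_mat_vec[OF N B w, symmetric] NB w by simp
  moreover have "B *\<^sub>v w \<in> carrier_vec n" by (rule mult_mat_vec_carrier[OF B w])
  ultimately show ?thesis by blast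
qed

lemma card_less_in_set_less_card:
  fixes C :: "nat set"
  assumes "finite C" "b \<in> C"
  shows "card {a\<in>C. a < b} < card C"
proof -
  have "{a\<in>C. a < b} \<subset> C" using assms(2) by auto
  then show ?thesis using assms(1) by (simp add: psubset_card_mono)
qed

lemma bij_betw_pick: "finite C \<Longrightarrow> bij_betw (pick C) {0..<card C} C"
proof -
  assume fin: "finite C"
  have "inj_on (pick C) {0..<card C}"
    unfolding inj_on_def by (metis atLeastLessThan_iff nat_neq_iff pick_mono)
  moreover have "pick C ` {0..<card C} = C"
  proof
    show "pick C ` {0..<card C} \<subseteq> C" using pick_in_set by auto
    show "C \<subseteq> pick C ` {0..<card C}"
    proof
      fix b assume b: "b \<in> C"
      show "b \<in> pick C ` {0..<card C}"
      proof (rule image_eqI)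
        show "b = pick C (card {a\<in>C. a < b})" using pick_card_in_set[OF b] by simp
        show "card {a\<in>C. a < b} \<in> {0..<card C}" using card_less_in_set_less_card[OF fin b] by simp
      qed
    qed
  qed
  ultimately show ?thesis unfolding bij_betw_def by blast
qed

lemma pick_less: "C \<subseteq> {0..<n} \<Longrightarrow> j < card C \<Longrightarrow> pick C j < n"
  using pick_in_set[of j C] by auto

lemma sum_eq_sum_pick:
  assumes C: "C \<subseteq> {0..<n}" and zero: "\<And>b. b < n \<Longrightarrow> b \<notin> C \<Longrightarrow> f b = 0"
  shows "(\<Sum>b\<in>{0..<n}. f b) = (\<Sum>j\<in>{0..<card C}. f (pick C j))"
proof -
  have fin: "finite C" using C finite_subset by blast
  have "(\<Sum>b\<in>{0..<n}. f b) = (\<Sum>b\<in>C. f b)"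
    by (rule sum.mono_neutral_right) (use C zero in auto)
  also have "\<dots> = (\<Sum>j\<in>{0..<card C}. f (pick C j))"
    using sum.reindex_bij_betw[OF bij_betw_pick[OF fin], of f] by simp
  finally show ?thesis .
qed

lemma principal_submatrix_carrier:
  assumes "A \<in> carrier_mat n n" "C \<subseteq> {0..<n}"
  shows "submatrix A C C \<in> carrier_mat (card C) (card C)"
proof -
  have "{i. i < n \<and> i \<in> C} = C" using assms(2) by auto
  then show ?thesis using assms(1) unfolding submatrix_def by auto
qed

lemma principal_submatrix_index:
  assumes "A \<in> carrier_mat n n" "C \<subseteq> {0..<n}" "j < card C" "k < card C"
  shows "submatrix A C C $$ (j,k) = A $$ (pick C j, pick C k)"
proof -
  have "{i. i < n \<and> i \<in> C} = C" using assms(2) by auto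
  then show ?thesis using submatrix_index[of j A C k C] assms by auto
qed

lemma mult_mat_vec_index_sum:
  "M \<in> carrier_mat n n \<Longrightarrow> z \<in> carrier_vec n \<Longrightarrow> a < n \<Longrightarrow>
    (M *\<^sub>v z) $ a = (\<Sum>b\<in>{0..<n}. M $$ (a,b) * z $ b)"
  by (auto simp: scalar_prod_def)

lemma principal_submatrix_square_index:
  assumes A: "A \<in> carrier_mat n n" and C: "C \<subseteq> {0..<n}" and j: "j < card C" and k: "k < card C"
    and zero: "\<And>b. b < n \<Longrightarrow> b \<notin> C \<Longrightarrow> A $$ (pick C j, b) * A $$ (b, pick C k) = 0"
  shows "(submatrix A C C * submatrix A C C) $$ (j,k) = (A * A) $$ (pick C j, pick C k)"
proof -
  have S: "submatrix A C C \<in> carrier_mat (card C) (card C)"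
    by (rule principal_submatrix_carrier[OF A C])
  have "pick C j < n" "pick C k < n" using pick_less[OF C] j k by auto
  then have "(A * A) $$ (pick C j, pick C k) = (\<Sum>b\<in>{0..<n}. A $$ (pick C j, b) * A $$ (b, pick C k))"
    using A by (auto simp: scalar_prod_def)
  also have "\<dots> = (\<Sum>i\<in>{0..<card C}. A $$ (pick C j, pick C i) * A $$ (pick C i, pick C k))"
    by (rule sum_eq_sum_pick[OF C zero])
  also have "\<dots> = (submatrix A C C * submatrix A C C) $$ (j,k)"
    using S j k principal_submatrix_index[OF A C] by (auto simp: scalar_prod_def intro!: sum.cong)
  finally show ?thesis by simp
qed

definition mat_with_unit_rows :: "nat set \<Rightarrow> 'a::zero_neq_one mat \<Rightarrow> 'a mat" where
  "mat_with_unit_rows C M =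
    mat (dim_row M) (dim_col M) (\<lambda>(a,b). if a \<in> C then (if a = b then 1 else 0) else M $$ (a,b))"

lemma mult_mat_with_unit_rows_index:
  fixes M :: "'a::comm_ring_1 mat"
  assumes M: "M \<in> carrier_mat n n" and v: "v \<in> carrier_vec n" and a: "a < n"
  shows "(mat_with_unit_rows C M *\<^sub>v v) $ a = (if a \<in> C then v $ a else (M *\<^sub>v v) $ a)"
proof -
  have N: "mat_with_unit_rows C M \<in> carrier_mat n n" using M by (simp add: mat_with_unit_rows_def)
  show ?thesis
  proof (cases "a \<in> C")
    case True
    have "(mat_with_unit_rows C M *\<^sub>v v) $ a = (\<Sum>b\<in>{0..<n}. if a = b then v $ b else 0)"
      unfolding mult_mat_vec_index_sum[OF N v a]
      using M a True by (intro sum.cong) (auto simp: mat_with_unit_rows_def)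
    then show ?thesis using a True by simp
  next
    case False
    show ?thesis
      unfolding mult_mat_vec_index_sum[OF N v a] mult_mat_vec_index_sum[OF M v a]
      using M a False by (auto simp: mat_with_unit_rows_def intro!: sum.cong)
  qed
qed

definition subvec :: "nat set \<Rightarrow> 'a vec \<Rightarrow> 'a vec" where
  "subvec C x = vec (card C) (\<lambda>j. x $ pick C j)"

lemma subvec_carrier [simp]: "subvec C x \<in> carrier_vec (card C)"
  unfolding subvec_def by simp

lemma subvec_index_card: "finite C \<Longrightarrow> b \<in> C \<Longrightarrow> subvec C x $ card {a\<in>C. a < b} = x $ b"
  unfolding subvec_def by (simp add: card_less_in_set_less_card pick_card_in_set)

lemma subvec_add:
  "C \<subseteq> {0..<n} \<Longrightarrow> x \<in> carrier_vec n \<Longrightarrow> y \<in> carrier_vec n \<Longrightarrow>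
    subvec C (x + y) = subvec C x + subvec C y"
  using pick_less by (intro eq_vecI) (auto simp: subvec_def)

lemma subvec_smult: "C \<subseteq> {0..<n} \<Longrightarrow> x \<in> carrier_vec n \<Longrightarrow> subvec C (c \<cdot>\<^sub>v x) = c \<cdot>\<^sub>v subvec C x"
  using pick_less by (intro eq_vecI) (auto simp: subvec_def)

lemma mult_subvec_principal_submatrix:
  assumes M: "M \<in> carrier_mat n n" and C: "C \<subseteq> {0..<n}" and x: "x \<in> carrier_vec n"
    and zero: "\<And>a b. a \<in> C \<Longrightarrow> b < n \<Longrightarrow> b \<notin> C \<Longrightarrow> M $$ (a,b) * x $ b = 0"
    and j: "j < card C"
  shows "(M *\<^sub>v x) $ pick C j = (submatrix M C C *\<^sub>v subvec C x) $ j"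
proof -
  have pj: "pick C j \<in> C" using pick_in_set j by auto
  then have "(M *\<^sub>v x) $ pick C j = (\<Sum>b\<in>{0..<n}. M $$ (pick C j, b) * x $ b)"
    using mult_mat_vec_index_sum[OF M x] C by auto
  also have "\<dots> = (\<Sum>i\<in>{0..<card C}. M $$ (pick C j, pick C i) * x $ pick C i)"
    by (rule sum_eq_sum_pick[OF C]) (use zero pj in auto)
  also have "\<dots> = (submatrix M C C *\<^sub>v subvec C x) $ j"
    using principal_submatrix_carrier[OF M C] j
    by (subst mult_mat_vec_index_sum) (auto simp: subvec_def principal_submatrix_index[OF M C])
  finally show ?thesis .
qed

lemma deformed_laplacian_carrier:
  "B \<in> carrier_mat m m \<Longrightarrow> deformed_laplacian B l \<in> carrier_mat m m"
  unfolding deformed_laplacian_def deg2_diag_def sym_part_def by auto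

lemma deformed_laplacian_index:
  "B \<in> carrier_mat m m \<Longrightarrow> a < m \<Longrightarrow> b < m \<Longrightarrow> deformed_laplacian B l $$ (a,b) =
     (if a = b then 1 else 0) - l * B $$ (a,b)
     + l^2 * ((if a = b then (B * B) $$ (a,a) else 0) - (if a = b then 1 else 0))
     + l^3 * (B $$ (a,b) - B $$ (a,b) * B $$ (b,a))"
  unfolding deformed_laplacian_def deg2_diag_def sym_part_def by auto

lemma digraph_adj_carrier: "digraph_adj n E \<in> carrier_mat n n"
  unfolding digraph_adj_def by auto

lemma digraph_adj_index: "a < n \<Longrightarrow> b < n \<Longrightarrow> digraph_adj n E $$ (a,b) = (if (a,b) \<in> E then 1 else 0)"
  unfolding digraph_adj_def by auto

lemma deformed_laplacian_digraph_off_edge: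
  "a < n \<Longrightarrow> b < n \<Longrightarrow> a \<noteq> b \<Longrightarrow> (a,b) \<notin> E \<Longrightarrow> deformed_laplacian (digraph_adj n E) l $$ (a,b) = 0"
  by (simp add: deformed_laplacian_index[OF digraph_adj_carrier] digraph_adj_index)

locale finite_digraph =
  fixes n :: nat and E :: "(nat \<times> nat) set"
  assumes edges_subset: "E \<subseteq> {0..<n} \<times> {0..<n}"
begin

lemma trancl_bounded: "(a,b) \<in> E\<^sup>+ \<Longrightarrow> a < n \<and> b < n"
  by (induction rule: trancl.induct) (use edges_subset in auto)

lemma equiv_comp_rel: "equiv {0..<n} (comp_rel n E)"
proof -
  have "trans (comp_rel n E)"
    unfolding trans_def comp_rel_def by (auto intro: trancl_trans)
  moreover have "refl_on {0..<n} (comp_rel n E)" unfolding refl_on_def comp_rel_def by auto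
  moreover have "sym (comp_rel n E)" unfolding sym_def comp_rel_def by auto
  moreover have "comp_rel n E \<subseteq> {0..<n} \<times> {0..<n}" unfolding comp_rel_def by auto
  ultimately show ?thesis unfolding equiv_def by blast
qed

lemma components_subset: "C \<in> components n E \<Longrightarrow> C \<subseteq> {0..<n}"
  unfolding components_def using in_quotient_imp_subset[OF equiv_comp_rel] by blast

lemma components_nonempty: "C \<in> components n E \<Longrightarrow> C \<noteq> {}"
  unfolding components_def using in_quotient_imp_non_empty[OF equiv_comp_rel] by blast

lemma class_in_components: "v < n \<Longrightarrow> comp_rel n E `` {v} \<in> components n E"
  unfolding components_def by (auto intro: quotientI)

lemma component_eq_class: "C \<in> components n E \<Longrightarrow> a \<in> C \<Longrightarrow> C = comp_rel n E `` {a}"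
  unfolding components_def
  by (metis equiv_class_eq[OF equiv_comp_rel] quotientE Image_singleton_iff)

lemma mem_component_iff:
  assumes "C \<in> components n E" "a \<in> C"
  shows "b \<in> C \<longleftrightarrow> b < n \<and> (a,b) \<in> E\<^sup>* \<and> (b,a) \<in> E\<^sup>*"
proof -
  have "a < n" using components_subset[OF assms(1)] assms(2) by auto
  then show ?thesis
    by (subst component_eq_class[OF assms]) (auto simp: comp_rel_def rtrancl_eq_or_trancl)
qed

lemma components_disjoint:
  "C \<in> components n E \<Longrightarrow> C' \<in> components n E \<Longrightarrow> C \<inter> C' \<noteq> {} \<Longrightarrow> C = C'"
  using component_eq_class by blast

text \<open>A sink component of a union \<open>S\<close> of components is found by minimising the set of
  vertices reachable from a vertex of \<open>S\<close>.\<close>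

lemma exists_sink_component:
  assumes S: "S \<subseteq> {0..<n}" "S \<noteq> {}"
    and closed: "\<forall>C\<in>components n E. C \<inter> S \<noteq> {} \<longrightarrow> C \<subseteq> S"
  shows "\<exists>C\<in>components n E. C \<subseteq> S \<and> (\<forall>a\<in>C. \<forall>b\<in>S. (a,b) \<in> E \<longrightarrow> b \<in> C)"
proof -
  define R where "R v = E\<^sup>* `` {v}" for v
  have finite_R: "finite (R v)" for v
  proof (rule finite_subset)
    show "R v \<subseteq> insert v {0..<n}"
      unfolding R_def by (auto simp: rtrancl_eq_or_trancl dest: trancl_bounded)
  qed simp
  obtain v0 where "v0 \<in> S" using S(2) by blast
  then obtain v where v: "v \<in> S" and v_min: "\<And>w. w \<in> S \<Longrightarrow> card (R v) \<le> card (R w)"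
    using ex_has_least_nat[of "\<lambda>x. x \<in> S" v0 "\<lambda>x. card (R x)"] by blast
  have "v < n" using v S(1) by auto
  define C where "C = comp_rel n E `` {v}"
  have C: "C \<in> components n E" unfolding C_def by (rule class_in_components) fact
  have vC: "v \<in> C" unfolding C_def using \<open>v < n\<close> by (auto simp: comp_rel_def)
  have "C \<subseteq> S" using closed C vC v by blast
  moreover have "b \<in> C" if a: "a \<in> C" and b: "b \<in> S" and ab: "(a,b) \<in> E" for a b
  proof (rule ccontr)
    assume bC: "b \<notin> C"
    have "(v,a) \<in> E\<^sup>*" using mem_component_iff[OF C vC, of a] a by blast
    then have vb: "(v,b) \<in> E\<^sup>*" using ab by (rule rtrancl_into_rtrancl)
    then have "R b \<subseteq> R v" unfolding R_def by (auto intro: rtrancl_trans)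
    moreover have "v \<notin> R b"
    proof
      assume "v \<in> R b"
      then have "(b,v) \<in> E\<^sup>*" unfolding R_def by simp
      moreover have "b < n" using b S(1) by auto
      ultimately show False using mem_component_iff[OF C vC, of b] vb bC by blast
    qed
    moreover have "v \<in> R v" unfolding R_def by auto
    ultimately have "R b \<subset> R v" by blast
    then have "card (R b) < card (R v)" by (rule psubset_card_mono[OF finite_R])
    then show False using v_min[OF b] by simp
  qed
  ultimately show ?thesis using C by blast
qed

lemma component_laplacian_eq_submatrix:
  assumes C: "C \<in> components n E"
  shows "component_laplacian n E C l = submatrix (deformed_laplacian (digraph_adj n E) l) C C"
proof (rule eq_matI)
  let ?A = "digraph_adj n E"
  let ?S = "submatrix ?A C C"
  have Cs: "C \<subseteq> {0..<n}" by (rule components_subset[OF C])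
  have S: "?S \<in> carrier_mat (card C) (card C)"
    by (rule principal_submatrix_carrier[OF digraph_adj_carrier Cs])
  have L: "deformed_laplacian ?A l \<in> carrier_mat n n"
    by (rule deformed_laplacian_carrier[OF digraph_adj_carrier])
  show "dim_row (component_laplacian n E C l) = dim_row (submatrix (deformed_laplacian ?A l) C C)"
    "dim_col (component_laplacian n E C l) = dim_col (submatrix (deformed_laplacian ?A l) C C)"
    using S principal_submatrix_carrier[OF L Cs] deformed_laplacian_carrier[OF S]
    unfolding component_laplacian_def by auto
  fix j k assume "j < dim_row (submatrix (deformed_laplacian ?A l) C C)"
    "k < dim_col (submatrix (deformed_laplacian ?A l) C C)"
  then have j: "j < card C" and k: "k < card C" using principal_submatrix_carrier[OF L Cs] by auto
  have pick_C: "pick C j \<in> C" "pick C k \<in> C" using pick_in_set[of j C] pick_in_set[of k C] j k by auto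
  then have pick_n: "pick C j < n" "pick C k < n" using Cs by auto
  \<comment> \<open>a closed walk of length two through a vertex of \<open>C\<close> stays in \<open>C\<close>\<close>
  have "(?S * ?S) $$ (j,j) = (?A * ?A) $$ (pick C j, pick C j)"
  proof (rule principal_submatrix_square_index[OF digraph_adj_carrier Cs j j])
    fix b assume "b < n" "b \<notin> C"
    then show "?A $$ (pick C j, b) * ?A $$ (b, pick C j) = 0"
      using mem_component_iff[OF C pick_C(1), of b] pick_n digraph_adj_index by auto
  qed
  moreover have "pick C j = pick C k \<longleftrightarrow> j = k"
    using pick_mono[of j C k] pick_mono[of k C j] j k by (metis nat_neq_iff)
  ultimately show "component_laplacian n E C l $$ (j,k) = submatrix (deformed_laplacian ?A l) C C $$ (j,k)"
    unfolding component_laplacian_def deformed_laplacian_index[OF S j k]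
      principal_submatrix_index[OF L Cs j k] deformed_laplacian_index[OF digraph_adj_carrier pick_n]
    using principal_submatrix_index[OF digraph_adj_carrier Cs j k]
      principal_submatrix_index[OF digraph_adj_carrier Cs k j]
    by (cases "j = k") simp_all
qed

end

locale edge_supported_matrix = finite_digraph +
  fixes M :: "'a::field mat"
  assumes M_carrier: "M \<in> carrier_mat n n"
    and M_off_edges: "\<And>a b. a < n \<Longrightarrow> b < n \<Longrightarrow> a \<noteq> b \<Longrightarrow> (a,b) \<notin> E \<Longrightarrow> M $$ (a,b) = 0"
begin

lemma component_block_carrier:
  "C \<in> components n E \<Longrightarrow> submatrix M C C \<in> carrier_mat (card C) (card C)"
  by (rule principal_submatrix_carrier[OF M_carrier components_subset])

lemma vanishes_on_component:
  assumes C: "C \<in> components n E" and det: "det (submatrix M C C) \<noteq> 0"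
    and z: "z \<in> carrier_vec n" and rows: "\<forall>a\<in>C. (M *\<^sub>v z) $ a = 0"
    and leaving: "\<forall>a\<in>C. \<forall>b<n. b \<notin> C \<longrightarrow> (a,b) \<in> E \<longrightarrow> z $ b = 0"
  shows "\<forall>b\<in>C. z $ b = 0"
proof -
  have Cs: "C \<subseteq> {0..<n}" by (rule components_subset[OF C])
  have "submatrix M C C *\<^sub>v subvec C z = 0\<^sub>v (card C)"
  proof (rule eq_vecI)
    fix j assume "j < dim_vec (0\<^sub>v (card C))"
    then have j: "j < card C" by simp
    have "(submatrix M C C *\<^sub>v subvec C z) $ j = (M *\<^sub>v z) $ pick C j"
    proof (rule mult_subvec_principal_submatrix[OF M_carrier Cs z _ j, symmetric])
      fix a b assume "a \<in> C" "b < n" "b \<notin> C"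
      moreover from this have "a < n" "a \<noteq> b" using Cs by auto
      ultimately show "M $$ (a,b) * z $ b = 0"
        using leaving M_off_edges by (cases "(a,b) \<in> E") auto
    qed
    also have "\<dots> = 0" using rows pick_in_set[of j C] j by auto
    finally show "(submatrix M C C *\<^sub>v subvec C z) $ j = 0\<^sub>v (card C) $ j" using j by simp
  qed (use component_block_carrier[OF C] in auto)
  then have sub_zero: "subvec C z = 0\<^sub>v (card C)"
    using det det_0_iff_vec_prod_zero[OF component_block_carrier[OF C]] subvec_carrier by blast
  have fin: "finite C" using Cs finite_subset by blast
  show ?thesis
  proof
    fix b assume b: "b \<in> C"
    have "z $ b = subvec C z $ card {a\<in>C. a < b}" by (rule subvec_index_card[OF fin b, symmetric])
    also have "\<dots> = 0" using sub_zero card_less_in_set_less_card[OF fin b] by simp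
    finally show "z $ b = 0" .
  qed
qed

lemma vanishes_on_union_of_components:
  assumes "S \<subseteq> {0..<n}" and "\<forall>C\<in>components n E. C \<inter> S \<noteq> {} \<longrightarrow> C \<subseteq> S"
    and "\<forall>C\<in>components n E. C \<subseteq> S \<longrightarrow> det (submatrix M C C) \<noteq> 0"
    and "z \<in> carrier_vec n" and "\<forall>a\<in>S. (M *\<^sub>v z) $ a = 0"
    and "\<forall>a\<in>S. \<forall>b<n. b \<notin> S \<longrightarrow> (a,b) \<in> E \<longrightarrow> z $ b = 0"
  shows "\<forall>b\<in>S. z $ b = 0"
  using assms
proof (induction "card S" arbitrary: S rule: less_induct)
  case less
  note S = less.prems(1) and closed = less.prems(2) and nonsing = less.prems(3)
    and z = less.prems(4) and rows = less.prems(5) and leaving = less.prems(6)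
  show ?case
  proof (cases "S = {}")
    case False
    obtain C where C: "C \<in> components n E" and CS: "C \<subseteq> S"
      and sink: "\<forall>a\<in>C. \<forall>b\<in>S. (a,b) \<in> E \<longrightarrow> b \<in> C"
      using exists_sink_component[OF S False closed] by blast
    have zC: "\<forall>b\<in>C. z $ b = 0"
    proof (rule vanishes_on_component[OF C _ z])
      show "det (submatrix M C C) \<noteq> 0" using nonsing C CS by blast
      show "\<forall>a\<in>C. (M *\<^sub>v z) $ a = 0" using rows CS by blast
      show "\<forall>a\<in>C. \<forall>b<n. b \<notin> C \<longrightarrow> (a,b) \<in> E \<longrightarrow> z $ b = 0"
        using sink leaving CS by blast
    qed
    have "\<forall>b\<in>S - C. z $ b = 0"
    proof (rule less.hyps)
      have "finite S" using S finite_subset by blast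
      moreover have "S - C \<subset> S" using CS components_nonempty[OF C] by blast
      ultimately show "card (S - C) < card S" by (simp add: psubset_card_mono)
      show "\<forall>C'\<in>components n E. C' \<inter> (S - C) \<noteq> {} \<longrightarrow> C' \<subseteq> S - C"
        using closed components_disjoint[OF C] by blast
      show "\<forall>a\<in>S - C. \<forall>b<n. b \<notin> S - C \<longrightarrow> (a,b) \<in> E \<longrightarrow> z $ b = 0"
        using leaving zC by blast
    qed (use S nonsing z rows in auto)
    with zC show ?thesis by blast
  qed simp
qed

context
  fixes Ci :: "nat set"
  assumes Ci: "Ci \<in> components n E"
    and nonsing: "\<forall>C\<in>components n E. C \<noteq> Ci \<longrightarrow> det (submatrix M C C) \<noteq> 0"
begin

lemma vanishes_if_not_reaching:
  assumes x: "x \<in> carrier_vec n" and rows: "\<forall>a<n. a \<notin> Ci \<longrightarrow> (M *\<^sub>v x) $ a = 0"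
    and b: "b < n" "\<forall>c\<in>Ci. (b,c) \<notin> E\<^sup>*"
  shows "x $ b = 0"
proof -
  define S where "S = {a. a < n \<and> (\<forall>c\<in>Ci. (a,c) \<notin> E\<^sup>*)}"
  have not_Ci: "a \<notin> Ci" if "a \<in> S" for a using that unfolding S_def by blast
  have "\<forall>b\<in>S. x $ b = 0"
  proof (rule vanishes_on_union_of_components[OF _ _ _ x])
    show "S \<subseteq> {0..<n}" unfolding S_def by auto
    show "\<forall>C\<in>components n E. C \<inter> S \<noteq> {} \<longrightarrow> C \<subseteq> S"
    proof (intro ballI impI subsetI)
      fix C w assume C: "C \<in> components n E" and "C \<inter> S \<noteq> {}" and w: "w \<in> C"
      then obtain a where a: "a \<in> C" "a \<in> S" by blast
      have aw: "(a,w) \<in> E\<^sup>*" and "w < n" using mem_component_iff[OF C a(1), of w] w by auto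
      have "(w,c) \<notin> E\<^sup>*" if "c \<in> Ci" for c
        using a(2) that rtrancl_trans[OF aw] unfolding S_def by blast
      with \<open>w < n\<close> show "w \<in> S" unfolding S_def by blast
    qed
    show "\<forall>C\<in>components n E. C \<subseteq> S \<longrightarrow> det (submatrix M C C) \<noteq> 0"
    proof (intro ballI impI)
      fix C assume "C \<in> components n E" "C \<subseteq> S"
      moreover obtain c where "c \<in> C" using components_nonempty[OF \<open>C \<in> components n E\<close>] by blast
      ultimately have "C \<noteq> Ci" using not_Ci by blast
      then show "det (submatrix M C C) \<noteq> 0" using nonsing \<open>C \<in> components n E\<close> by blast
    qed
    show "\<forall>a\<in>S. (M *\<^sub>v x) $ a = 0" using rows not_Ci unfolding S_def by blast
    show "\<forall>a\<in>S. \<forall>b<n. b \<notin> S \<longrightarrow> (a,b) \<in> E \<longrightarrow> x $ b = 0"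
    proof (intro ballI allI impI)
      fix a b assume a: "a \<in> S" and "b < n" "b \<notin> S" and ab: "(a,b) \<in> E"
      then obtain c where c: "c \<in> Ci" "(b,c) \<in> E\<^sup>*" unfolding S_def by auto
      have "(a,c) \<in> E\<^sup>*" using ab c(2) by (rule converse_rtrancl_into_rtrancl)
      with a c(1) show "x $ b = 0" unfolding S_def by blast
    qed
  qed
  then show ?thesis using b unfolding S_def by blast
qed

lemma mult_vec_pick_component:
  assumes x: "x \<in> carrier_vec n" and rows: "\<forall>a<n. a \<notin> Ci \<longrightarrow> (M *\<^sub>v x) $ a = 0"
    and j: "j < card Ci"
  shows "(M *\<^sub>v x) $ pick Ci j = (submatrix M Ci Ci *\<^sub>v subvec Ci x) $ j"
proof (rule mult_subvec_principal_submatrix[OF M_carrier components_subset[OF Ci] x _ j])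
  fix a b assume a: "a \<in> Ci" and b: "b < n" "b \<notin> Ci"
  have "a < n" "a \<noteq> b" using a b components_subset[OF Ci] by auto
  show "M $$ (a,b) * x $ b = 0"
  proof (cases "(a,b) \<in> E")
    case True
    \<comment> \<open>an edge leaving \<open>Ci\<close> never leads back to \<open>Ci\<close>\<close>
    have "(b,c) \<notin> E\<^sup>*" if c: "c \<in> Ci" for c
    proof
      assume "(b,c) \<in> E\<^sup>*"
      moreover have "(c,a) \<in> E\<^sup>*" using mem_component_iff[OF Ci c, of a] a by blast
      ultimately have "(b,a) \<in> E\<^sup>*" by (rule rtrancl_trans)
      moreover have "(a,b) \<in> E\<^sup>*" using True by blast
      ultimately show False using mem_component_iff[OF Ci a, of b] b by blast
    qed
    then show ?thesis using vanishes_if_not_reaching[OF x rows b(1)] by simp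
  next
    case False
    then show ?thesis using M_off_edges \<open>a < n\<close> \<open>a \<noteq> b\<close> b(1) by simp
  qed
qed

lemma eq_zero_if_vanishes_on_component:
  assumes z: "z \<in> carrier_vec n" and rows: "\<forall>a<n. a \<notin> Ci \<longrightarrow> (M *\<^sub>v z) $ a = 0"
    and zero_Ci: "\<forall>b\<in>Ci. z $ b = 0"
  shows "z = 0\<^sub>v n"
proof -
  have "\<forall>b\<in>{0..<n} - Ci. z $ b = 0"
  proof (rule vanishes_on_union_of_components[OF _ _ _ z])
    show "\<forall>C\<in>components n E. C \<inter> ({0..<n} - Ci) \<noteq> {} \<longrightarrow> C \<subseteq> {0..<n} - Ci"
      using components_disjoint[OF Ci] components_subset by blast
    show "\<forall>C\<in>components n E. C \<subseteq> {0..<n} - Ci \<longrightarrow> det (submatrix M C C) \<noteq> 0"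
      using nonsing components_nonempty[OF Ci] components_subset[OF Ci] by auto
  qed (use rows zero_Ci in auto)
  then show ?thesis using zero_Ci z by (intro eq_vecI) auto
qed

lemma subvec_mem_kernel_iff:
  assumes x: "x \<in> carrier_vec n" and rows: "\<forall>a<n. a \<notin> Ci \<longrightarrow> (M *\<^sub>v x) $ a = 0"
  shows "subvec Ci x \<in> mat_kernel (submatrix M Ci Ci) \<longleftrightarrow> x \<in> mat_kernel M"
proof -
  have fin: "finite Ci" using components_subset[OF Ci] finite_subset by blast
  have "M *\<^sub>v x = 0\<^sub>v n \<longleftrightarrow> (\<forall>j<card Ci. (M *\<^sub>v x) $ pick Ci j = 0)"
  proof
    assume "\<forall>j<card Ci. (M *\<^sub>v x) $ pick Ci j = 0"
    then have "\<forall>a\<in>Ci. (M *\<^sub>v x) $ a = 0"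
      using pick_card_in_set card_less_in_set_less_card[OF fin] by metis
    then show "M *\<^sub>v x = 0\<^sub>v n"
      using rows M_carrier by (intro eq_vecI) (auto simp del: index_mult_mat_vec)
  qed (use pick_less[OF components_subset[OF Ci]] in simp)
  moreover have "submatrix M Ci Ci *\<^sub>v subvec Ci x = 0\<^sub>v (card Ci) \<longleftrightarrow>
      (\<forall>j<card Ci. (submatrix M Ci Ci *\<^sub>v subvec Ci x) $ j = 0)"
    using component_block_carrier[OF Ci] by (auto simp del: index_mult_mat_vec)
  ultimately show ?thesis
    using x mat_kernel[OF M_carrier] mat_kernel[OF component_block_carrier[OF Ci]]
      mult_vec_pick_component[OF x rows] by auto
qed

text \<open>Replacing the rows of \<open>M\<close> indexed by \<open>Ci\<close> with unit rows gives a matrix with trivial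
  kernel; solving the corresponding system extends \<open>y\<close> from \<open>Ci\<close>.\<close>

lemma exists_extension_from_component:
  assumes y: "y \<in> carrier_vec (card Ci)"
  shows "\<exists>x\<in>carrier_vec n. subvec Ci x = y \<and> (\<forall>a<n. a \<notin> Ci \<longrightarrow> (M *\<^sub>v x) $ a = 0)"
proof -
  let ?N = "mat_with_unit_rows Ci M"
  have N: "?N \<in> carrier_mat n n" using M_carrier by (simp add: mat_with_unit_rows_def)
  note N_row = mult_mat_with_unit_rows_index[where C = Ci, OF M_carrier]
  have "v = 0\<^sub>v n" if v: "v \<in> carrier_vec n" and Nv: "?N *\<^sub>v v = 0\<^sub>v n" for v
  proof (rule eq_zero_if_vanishes_on_component[OF v])
    have N_row_zero: "(if a \<in> Ci then v $ a else (M *\<^sub>v v) $ a) = 0" if "a < n" for a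
      using N_row[OF v that] Nv that by simp
    show "\<forall>a<n. a \<notin> Ci \<longrightarrow> (M *\<^sub>v v) $ a = 0"
      using N_row_zero by (intro allI impI) (metis (full_types))
    show "\<forall>b\<in>Ci. v $ b = 0"
      using N_row_zero components_subset[OF Ci] by (intro ballI) (metis atLeastLessThan_iff subsetD)
  qed
  moreover define w where "w = vec n (\<lambda>a. if a \<in> Ci then y $ card {c\<in>Ci. c < a} else 0)"
  moreover have "w \<in> carrier_vec n" unfolding w_def by simp
  ultimately obtain x where x: "x \<in> carrier_vec n" and Nx: "?N *\<^sub>v x = w"
    using exists_mult_mat_vec_eq_if_kernel_trivial[OF N] by blast
  have "subvec Ci x = y"
  proof (rule eq_vecI)
    fix j assume "j < dim_vec y"
    then have j: "j < card Ci" using y by simp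
    have "pick Ci j \<in> Ci" "pick Ci j < n" using pick_in_set[of j Ci] j components_subset[OF Ci] by auto
    then show "subvec Ci x $ j = y $ j"
      using N_row[OF x, of "pick Ci j"] Nx card_pick[of j Ci] j by (simp add: subvec_def w_def)
  qed (use y in simp)
  moreover have "(M *\<^sub>v x) $ a = 0" if "a < n" "a \<notin> Ci" for a
    using N_row[OF x that(1)] Nx that by (simp add: w_def)
  ultimately show ?thesis using x by blast
qed

lemma inj_on_subvec_kernel: "inj_on (subvec Ci) (mat_kernel M)"
proof (rule inj_onI)
  fix x y assume "x \<in> mat_kernel M" "y \<in> mat_kernel M" and xy: "subvec Ci x = subvec Ci y"
  then have x: "x \<in> carrier_vec n" "M *\<^sub>v x = 0\<^sub>v n" and y: "y \<in> carrier_vec n" "M *\<^sub>v y = 0\<^sub>v n"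
    using mat_kernel[OF M_carrier] by auto
  have fin: "finite Ci" using components_subset[OF Ci] finite_subset by blast
  have "x - y = 0\<^sub>v n"
  proof (rule eq_zero_if_vanishes_on_component)
    show "x - y \<in> carrier_vec n" using x(1) y(1) by simp
    have "M *\<^sub>v (x - y) = 0\<^sub>v n" using mult_minus_distrib_mat_vec[OF M_carrier x(1) y(1)] x y by simp
    then show "\<forall>a<n. a \<notin> Ci \<longrightarrow> (M *\<^sub>v (x - y)) $ a = 0" by simp
    show "\<forall>b\<in>Ci. (x - y) $ b = 0"
    proof
      fix b assume b: "b \<in> Ci"
      then have "x $ b = y $ b" using subvec_index_card[OF fin b] xy by metis
      then show "(x - y) $ b = 0" using b components_subset[OF Ci] y by auto
    qed
  qed
  show "x = y"
  proof (rule eq_vecI)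
    fix i assume "i < dim_vec y"
    then have "(x - y) $ i = 0" using \<open>x - y = 0\<^sub>v n\<close> y by simp
    then show "x $ i = y $ i" using \<open>i < dim_vec y\<close> by simp
  qed (use x y in simp)
qed

lemma subvec_image_kernel: "subvec Ci ` mat_kernel M = mat_kernel (submatrix M Ci Ci)"
proof
  have "x \<in> carrier_vec n \<and> (\<forall>a<n. a \<notin> Ci \<longrightarrow> (M *\<^sub>v x) $ a = 0)" if "x \<in> mat_kernel M" for x
    using that mat_kernel[OF M_carrier] by auto
  then show "subvec Ci ` mat_kernel M \<subseteq> mat_kernel (submatrix M Ci Ci)"
    using subvec_mem_kernel_iff by blast
  show "mat_kernel (submatrix M Ci Ci) \<subseteq> subvec Ci ` mat_kernel M"
  proof
    fix y assume y: "y \<in> mat_kernel (submatrix M Ci Ci)"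
    then obtain x where "x \<in> carrier_vec n" "subvec Ci x = y" "\<forall>a<n. a \<notin> Ci \<longrightarrow> (M *\<^sub>v x) $ a = 0"
      using exists_extension_from_component mat_kernel_carrier[OF component_block_carrier[OF Ci]]
      by blast
    then show "y \<in> subvec Ci ` mat_kernel M" using subvec_mem_kernel_iff y by blast
  qed
qed

lemma kernel_dim_eq_component_block: "kernel_dim M = kernel_dim (submatrix M Ci Ci)"
  using kernel_dim_eq_if_linear_bij[OF M_carrier component_block_carrier[OF Ci]
      subvec_add[OF components_subset[OF Ci]] subvec_smult[OF components_subset[OF Ci]]
      inj_on_subvec_kernel subvec_image_kernel] .

end

end

theorem proposition3p7:
  fixes n :: nat and E :: "(nat \<times> nat) set" and Ci :: "nat set" and l :: complex
  assumes "E \<subseteq> {0..<n} \<times> {0..<n}"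
    and "\<forall>i. (i,i) \<notin> E"
    and "Ci \<in> components n E"
    and "l \<noteq> 1" and "l \<noteq> -1"
    and "finite_eigenvalue (component_laplacian n E Ci) l"
    and "\<forall>C \<in> components n E. C \<noteq> Ci \<longrightarrow> \<not> finite_eigenvalue (component_laplacian n E C) l"
  shows "geom_mult (deformed_laplacian (digraph_adj n E)) l = geom_mult (component_laplacian n E Ci) l"
proof -
  let ?M = "deformed_laplacian (digraph_adj n E) l"
  interpret edge_supported_matrix n E ?M
    by unfold_locales
      (use assms(1) deformed_laplacian_carrier[OF digraph_adj_carrier]
        deformed_laplacian_digraph_off_edge in auto)
  have blocks: "component_laplacian n E C l = submatrix ?M C C" if "C \<in> components n E" for C
    by (rule component_laplacian_eq_submatrix[OF that])
  show ?thesis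
    unfolding geom_mult_def blocks[OF assms(3)]
    by (rule kernel_dim_eq_component_block[OF assms(3)])
      (use assms(7) blocks in \<open>auto simp: finite_eigenvalue_def\<close>)
qed

end
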